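(* Let $C\in\mathbb{R}^{p\times p}$ be positive definite, $w\in\mathbb{R}^p$, $\mu>0$. For $\tau>0$ let $\hat u_\tau\in(-\mu,\mu)^p$ be the unique real solution of $(\mu^2-u_j^2)[C^{-1}(w-u)]_j-u_j/\tau=0$, let $D_\tau$ be the diagonal matrix with $(D_\tau)_{jj}=\tau(\mu^2-\hat u_{\tau,j}^2)^2/(\mu^2+\hat u_{\tau,j}^2)$, and let $$E_\tau=\tau D_\tau(C+D_\tau)^{-1}C=\frac\tau2\bigl[D_\tau(C+D_\tau)^{-1}C+C(C+D_\tau)^{-1}D_\tau\bigr].$$ With $\hat u=\lim_{\tau\to\infty}\hat u_\tau$, $\hat x=C^{-1}(w-\hat u)$, $I=\{j:\hat x_j\neq0\}$ and $I^c=\{1,\dots,p\}\setminus I$, assume there are no transition coordinates, i.e. $|\hat u_j|<\mu$ for all $j\in I^c$. Then as $\tau\to\infty$, $$(E_\tau)_{ij}=\begin{cases}O(\tau) & i,j\in I^c,\\ O(1) & \text{otherwise.}\end{cases}$$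
   Context: Standing facts: $\hat u_\tau\to\hat u$, where $\hat u$ is the unique minimizer of $(w-u)^TC^{-1}(w-u)$ over $\{|u_j|\le\mu\ \forall j\}$, and $\hat x=C^{-1}(w-\hat u)$ is the unique minimizer of $H(x)=x^TCx-2w^Tx+2\mu\|x\|_1$; also $\hat x_\tau:=C^{-1}(w-\hat u_\tau)\to\hat x$. For $j\in I$ one has $|\hat u_j|=\mu$. *)

theory Defs
  imports "HOL-Analysis.Analysis" "HOL-Library.Landau_Symbols"
begin

definition pos_def_mat :: "real^'n^'n \<Rightarrow> bool" where
  "pos_def_mat C \<longleftrightarrow> transpose C = C \<and> (\<forall>x. x \<noteq> 0 \<longrightarrow> x \<bullet> (C *v x) > 0)"

definition tau_sol :: "real^'n^'n \<Rightarrow> real^'n \<Rightarrow> real \<Rightarrow> real \<Rightarrow> real^'n \<Rightarrow> bool" where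
  "tau_sol C w mu tau u \<longleftrightarrow>
     (\<forall>j. \<bar>u $ j\<bar> < mu) \<and>
     (\<forall>j. (mu^2 - (u $ j)^2) * ((matrix_inv C *v (w - u)) $ j) - u $ j / tau = 0)"

definition u_hat :: "real^'n^'n \<Rightarrow> real^'n \<Rightarrow> real \<Rightarrow> real \<Rightarrow> real^'n" where
  "u_hat C w mu tau = (THE u. tau_sol C w mu tau u)"

definition D_mat :: "real^'n^'n \<Rightarrow> real^'n \<Rightarrow> real \<Rightarrow> real \<Rightarrow> real^'n^'n" where
  "D_mat C w mu tau = (\<chi> i j. if i = j then
      tau * (mu^2 - (u_hat C w mu tau $ j)^2)^2 / (mu^2 + (u_hat C w mu tau $ j)^2) else 0)"

definition E_mat :: "real^'n^'n \<Rightarrow> real^'n \<Rightarrow> real \<Rightarrow> real \<Rightarrow> real^'n^'n" where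
  "E_mat C w mu tau = tau *\<^sub>R (D_mat C w mu tau ** matrix_inv (C + D_mat C w mu tau) ** C)"

end

theory Submission
  imports Defs
begin

text \<open>
  Put \<open>A\<^sub>\<tau> = C + D\<^sub>\<tau>\<close>. As \<open>D\<^sub>\<tau>\<close> is diagonal with nonnegative entries, \<open>A\<^sub>\<tau>\<close> is
  coercive with the constant of \<open>C\<close>, so the entries of \<open>A\<^sub>\<tau>\<^sup>-\<^sup>1\<close> stay bounded.
  Since \<open>D\<^sub>\<tau> = A\<^sub>\<tau> - C\<close>, we have \<open>D\<^sub>\<tau> A\<^sub>\<tau>\<^sup>-\<^sup>1 C = C - C A\<^sub>\<tau>\<^sup>-\<^sup>1 C = C A\<^sub>\<tau>\<^sup>-\<^sup>1 D\<^sub>\<tau>\<close>;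
  the middle form gives \<open>E\<^sub>\<tau> = O(\<tau>)\<close>. With \<open>y\<^sub>\<tau> = C\<^sup>-\<^sup>1(w - u\<^sub>\<tau>) \<longrightarrow> x = C\<^sup>-\<^sup>1(w - U)\<close>,
  the defining equation of \<open>u\<^sub>\<tau>\<close> reads \<open>\<tau>(\<mu>\<^sup>2 - u\<^sub>\<tau>\<^sub>j\<^sup>2) y\<^sub>\<tau>\<^sub>j = u\<^sub>\<tau>\<^sub>j\<close>, so
  \<open>\<tau> (D\<^sub>\<tau>)\<^sub>j\<^sub>j \<le> 1 / y\<^sub>\<tau>\<^sub>j\<^sup>2\<close> stays bounded when \<open>x\<^sub>j \<noteq> 0\<close>. Choosing the outer forms so that
  the diagonal factor sits on the side of such an index gives \<open>(E\<^sub>\<tau>)\<^sub>i\<^sub>j = O(1)\<close>.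
\<close>

lemma matrix_mul_matrix_inv:
  fixes A :: "real^'n^'n"
  assumes "invertible A"
  shows "A ** matrix_inv A = mat 1" and "matrix_inv A ** A = mat 1"
  using assms unfolding invertible_def matrix_inv_def by (auto intro: someI2_ex)

lemma matrix_diff_rdistrib: "((A::real^'n^'m) - B) ** (C::real^'p^'n) = A ** C - B ** C"
  by (vector matrix_matrix_mult_def sum_subtractf[symmetric] field_simps)

lemma matrix_diff_ldistrib: "(C::real^'n^'m) ** ((A::real^'p^'n) - B) = C ** A - C ** B"
  by (vector matrix_matrix_mult_def sum_subtractf[symmetric] field_simps)

lemma quadratic_form_pos_imp_coercive:
  fixes C :: "real^'n^'n"
  assumes "\<forall>x. x \<noteq> 0 \<longrightarrow> x \<bullet> (C *v x) > 0"
  shows "\<exists>l>0. \<forall>x. l * norm x ^ 2 \<le> x \<bullet> (C *v x)"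
proof -
  have "continuous_on (sphere 0 1) (\<lambda>x::real^'n. x \<bullet> (C *v x))"
    by (intro continuous_intros)
  moreover have "sphere (0::real^'n) 1 \<noteq> {}"
    using norm_axis_1 by (metis mem_sphere_0 empty_iff)
  ultimately obtain x0 where x0: "x0 \<in> sphere 0 1"
    and min: "\<forall>y\<in>sphere 0 1. x0 \<bullet> (C *v x0) \<le> y \<bullet> (C *v y)"
    using continuous_attains_inf[OF compact_sphere] by blast
  have pos: "x0 \<bullet> (C *v x0) > 0"
    using x0 assms by (metis norm_zero mem_sphere_0 zero_neq_one)
  have "x0 \<bullet> (C *v x0) * norm x ^ 2 \<le> x \<bullet> (C *v x)" for x
  proof (cases "x = 0")
    case False
    let ?y = "(1 / norm x) *\<^sub>R x"
    have "?y \<in> sphere 0 1"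
      using False by simp
    with min have "x0 \<bullet> (C *v x0) \<le> ?y \<bullet> (C *v ?y)"
      by blast
    also have "?y \<bullet> (C *v ?y) = (x \<bullet> (C *v x)) / norm x ^ 2"
      by (simp add: matrix_vector_mult_scaleR power2_eq_square)
    finally show ?thesis
      using False by (simp add: pos_le_divide_eq)
  qed simp
  with pos show ?thesis by blast
qed

lemma coercive_imp_invertible:
  fixes A :: "real^'n^'n"
  assumes "l > 0" and "\<forall>x. l * norm x ^ 2 \<le> x \<bullet> (A *v x)"
  shows "invertible A"
proof -
  have "x = 0" if "A *v x = 0" for x
  proof -
    have "l * norm x ^ 2 \<le> 0"
      using assms(2) that by (metis inner_zero_right)
    then show "x = 0"
      using assms(1) by (simp add: mult_le_0_iff)
  qed
  then show ?thesis
    using matrix_left_invertible_ker invertible_left_inverse by blast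
qed

lemma coercive_matrix_inv_entry_le:
  fixes A :: "real^'n^'n"
  assumes l: "l > 0" and coercive: "\<forall>x. l * norm x ^ 2 \<le> x \<bullet> (A *v x)"
  shows "\<bar>matrix_inv A $ i $ j\<bar> \<le> 1 / l"
proof -
  let ?x = "matrix_inv A *v axis j 1"
  have "A *v ?x = axis j 1"
    using matrix_mul_matrix_inv(1)[OF coercive_imp_invertible[OF assms]]
    by (simp add: matrix_vector_mul_assoc)
  then have "l * norm ?x ^ 2 \<le> ?x \<bullet> axis j 1"
    using coercive by metis
  also have "\<dots> \<le> norm ?x"
    using norm_cauchy_schwarz[of ?x "axis j 1"] by (simp add: norm_axis_1)
  finally have "l * norm ?x ^ 2 \<le> norm ?x" .
  then have "norm ?x \<le> 1 / l"
    using l by (cases "norm ?x = 0") (auto simp: power2_eq_square pos_le_divide_eq mult.commute)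
  moreover have "matrix_inv A $ i $ j = ?x $ i"
    by (simp add: matrix_vector_mult_basis column_def)
  ultimately show ?thesis
    using component_le_norm_cart[of ?x i] by simp
qed

lemma quadratic_form_diagonal_nonneg:
  fixes D :: "real^'n^'n"
  assumes "\<forall>i j. i \<noteq> j \<longrightarrow> D $ i $ j = 0" and "\<forall>i. D $ i $ i \<ge> 0"
  shows "x \<bullet> (D *v x) \<ge> 0"
proof -
  have "(D *v x) $ i = D $ i $ i * x $ i" for i
  proof -
    have "(\<Sum>k\<in>UNIV. D $ i $ k * x $ k) = (\<Sum>k\<in>UNIV. if k = i then D $ i $ i * x $ i else 0)"
      by (rule sum.cong) (use assms(1) in auto)
    then show ?thesis
      by (simp add: matrix_vector_mult_def)
  qed
  then have "x \<bullet> (D *v x) = (\<Sum>i\<in>UNIV. D $ i $ i * (x $ i)\<^sup>2)"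
    by (simp add: inner_vec_def power2_eq_square mult_ac)
  also have "\<dots> \<ge> 0"
    using assms(2) by (simp add: sum_nonneg)
  finally show ?thesis .
qed

lemma matrix_inv_add_psd_bigo_1:
  fixes C :: "real^'n^'n" and D :: "'a \<Rightarrow> real^'n^'n"
  assumes "\<forall>x. x \<noteq> 0 \<longrightarrow> x \<bullet> (C *v x) > 0"
    and "\<forall>\<^sub>F t in F. \<forall>x. x \<bullet> (D t *v x) \<ge> 0"
  shows "\<forall>\<^sub>F t in F. invertible (C + D t)"
    and "(\<lambda>t. matrix_inv (C + D t) $ i $ j) \<in> O[F](\<lambda>_. 1)"
proof -
  obtain l where l: "l > 0" and coercive: "\<forall>x. l * norm x ^ 2 \<le> x \<bullet> (C *v x)"
    using quadratic_form_pos_imp_coercive[OF assms(1)] by blast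
  have "\<forall>\<^sub>F t in F. \<forall>x. l * norm x ^ 2 \<le> x \<bullet> ((C + D t) *v x)"
    using assms(2)
    by eventually_elim
      (simp add: matrix_vector_mult_add_rdistrib inner_add_right add_increasing2 coercive)
  then show "\<forall>\<^sub>F t in F. invertible (C + D t)"
    and "(\<lambda>t. matrix_inv (C + D t) $ i $ j) \<in> O[F](\<lambda>_. 1)"
    by (auto elim!: eventually_mono intro!: bigoI[where c = "1 / l"]
        coercive_imp_invertible[OF l] coercive_matrix_inv_entry_le[OF l])
qed

lemma matrix_mult_entries_bigo:
  fixes P Q :: "'a \<Rightarrow> real^'n^'n"
  assumes "\<And>i k. (\<lambda>t. P t $ i $ k) \<in> O[F](f)"
    and "\<And>k j. (\<lambda>t. Q t $ k $ j) \<in> O[F](g)"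
  shows "(\<lambda>t. (P t ** Q t) $ i $ j) \<in> O[F](\<lambda>t. f t * g t)"
  unfolding matrix_matrix_mult_def
  by (simp add: big_sum_in_bigo landau_o.big.mult assms)

lemma matrix_mult_diagonal_left:
  fixes D B :: "real^'n^'n"
  assumes "\<forall>i j. i \<noteq> j \<longrightarrow> D $ i $ j = 0"
  shows "(D ** B) $ i $ j = D $ i $ i * B $ i $ j"
proof -
  have "(\<Sum>k\<in>UNIV. D $ i $ k * B $ k $ j) = (\<Sum>k\<in>UNIV. if k = i then D $ i $ i * B $ i $ j else 0)"
    by (rule sum.cong) (use assms in auto)
  then show ?thesis
    by (simp add: matrix_matrix_mult_def)
qed

lemma matrix_mult_diagonal_right:
  fixes D B :: "real^'n^'n"
  assumes "\<forall>i j. i \<noteq> j \<longrightarrow> D $ i $ j = 0"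
  shows "(B ** D) $ i $ j = B $ i $ j * D $ j $ j"
proof -
  have "(\<Sum>k\<in>UNIV. B $ i $ k * D $ k $ j) = (\<Sum>k\<in>UNIV. if k = j then B $ i $ j * D $ j $ j else 0)"
    by (rule sum.cong) (use assms in auto)
  then show ?thesis
    by (simp add: matrix_matrix_mult_def)
qed

lemma matrix_inv_sandwich:
  fixes A C :: "real^'n^'n"
  assumes "invertible A"
  shows "(A - C) ** matrix_inv A ** C = C - C ** matrix_inv A ** C"
    and "(A - C) ** matrix_inv A ** C = C ** matrix_inv A ** (A - C)"
proof -
  show *: "(A - C) ** matrix_inv A ** C = C - C ** matrix_inv A ** C"
    by (simp add: matrix_diff_rdistrib matrix_mul_matrix_inv(1)[OF assms])
  show "(A - C) ** matrix_inv A ** C = C ** matrix_inv A ** (A - C)"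
    unfolding *
    by (simp add: matrix_diff_ldistrib matrix_mul_assoc[symmetric] matrix_mul_matrix_inv(2)[OF assms])
qed

lemma tau_sol_entry_weight_le:
  fixes tau mu u y :: real
  assumes "tau \<noteq> 0" and "y \<noteq> 0" and "(mu^2 - u^2) * y - u / tau = 0"
  shows "tau * (tau * (mu^2 - u^2)^2 / (mu^2 + u^2)) \<le> 1 / y^2"
proof -
  have eq: "tau * (mu^2 - u^2) = u / y"
    using assms by (simp add: field_simps)
  have "tau * (tau * (mu^2 - u^2)^2 / (mu^2 + u^2)) = (tau * (mu^2 - u^2))^2 / (mu^2 + u^2)"
    by (simp add: power2_eq_square)
  also have "\<dots> = u^2 / (mu^2 + u^2) * (1 / y^2)"
    unfolding eq by (simp add: power_divide)
  also have "\<dots> \<le> 1 * (1 / y^2)"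
  proof (rule mult_right_mono)
    show "u^2 / (mu^2 + u^2) \<le> 1"
      by (cases "mu^2 + u^2 = 0") (auto simp: divide_le_eq_1 less_le)
  qed simp
  finally show ?thesis
    by simp
qed

lemma D_mat_off_diagonal: "\<forall>i j. i \<noteq> j \<longrightarrow> D_mat C w mu tau $ i $ j = 0"
  by (simp add: D_mat_def)

lemma D_mat_diagonal_nonneg: "tau \<ge> 0 \<Longrightarrow> D_mat C w mu tau $ j $ j \<ge> 0"
  by (simp add: D_mat_def)

lemma E_mat_entry:
  "E_mat C w mu tau $ i $ j = tau * (D_mat C w mu tau ** matrix_inv (C + D_mat C w mu tau) ** C) $ i $ j"
  by (simp add: E_mat_def)

lemma matrix_inv_C_plus_D_mat:
  assumes "pos_def_mat C"
  shows "\<forall>\<^sub>F tau in at_top. invertible (C + D_mat C w mu tau)"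
    and "(\<lambda>tau. matrix_inv (C + D_mat C w mu tau) $ i $ j) \<in> O[at_top](\<lambda>_. 1)"
proof -
  have "\<forall>\<^sub>F tau in at_top. \<forall>x. x \<bullet> (D_mat C w mu tau *v x) \<ge> 0"
    using eventually_ge_at_top[of 0]
    by eventually_elim
      (intro allI quadratic_form_diagonal_nonneg D_mat_off_diagonal, simp add: D_mat_diagonal_nonneg)
  then show "\<forall>\<^sub>F tau in at_top. invertible (C + D_mat C w mu tau)"
    and "(\<lambda>tau. matrix_inv (C + D_mat C w mu tau) $ i $ j) \<in> O[at_top](\<lambda>_. 1)"
    using assms matrix_inv_add_psd_bigo_1 unfolding pos_def_mat_def by blast+
qed

lemma matrix_inv_C_plus_D_mat_products_bigo_1:
  assumes "pos_def_mat C"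
  shows "(\<lambda>tau. (C ** matrix_inv (C + D_mat C w mu tau)) $ i $ j) \<in> O[at_top](\<lambda>_. 1)"
    and "(\<lambda>tau. (matrix_inv (C + D_mat C w mu tau) ** C) $ i $ j) \<in> O[at_top](\<lambda>_. 1)"
    and "(\<lambda>tau. (C ** matrix_inv (C + D_mat C w mu tau) ** C) $ i $ j) \<in> O[at_top](\<lambda>_. 1)"
proof -
  let ?Ai = "\<lambda>tau. matrix_inv (C + D_mat C w mu tau)"
  have C: "(\<lambda>_. C $ i $ j) \<in> O[at_top](\<lambda>_. 1)" for i j
    by simp
  note Ai = matrix_inv_C_plus_D_mat(2)[OF assms]
  show CAi: "(\<lambda>tau. (C ** ?Ai tau) $ i $ j) \<in> O[at_top](\<lambda>_. 1)" for i j
    using matrix_mult_entries_bigo[of "\<lambda>_. C" at_top "\<lambda>_. 1" ?Ai "\<lambda>_. 1"] C Ai by simp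
  show "(\<lambda>tau. (?Ai tau ** C) $ i $ j) \<in> O[at_top](\<lambda>_. 1)"
    using matrix_mult_entries_bigo[of ?Ai at_top "\<lambda>_. 1" "\<lambda>_. C" "\<lambda>_. 1"] C Ai by simp
  show "(\<lambda>tau. (C ** ?Ai tau ** C) $ i $ j) \<in> O[at_top](\<lambda>_. 1)"
    using matrix_mult_entries_bigo[of "\<lambda>tau. C ** ?Ai tau" at_top "\<lambda>_. 1" "\<lambda>_. C" "\<lambda>_. 1"] C CAi
    by simp
qed

lemma E_mat_bigo_tau:
  assumes "pos_def_mat C"
  shows "(\<lambda>tau. E_mat C w mu tau $ i $ j) \<in> O[at_top](\<lambda>tau. tau)"
proof -
  let ?Ai = "\<lambda>tau. matrix_inv (C + D_mat C w mu tau)"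
  have "\<forall>\<^sub>F tau in at_top.
      E_mat C w mu tau $ i $ j = tau * (C $ i $ j - (C ** ?Ai tau ** C) $ i $ j)"
    using matrix_inv_C_plus_D_mat(1)[OF assms, of w mu]
  proof eventually_elim
    case (elim tau)
    show ?case
      using matrix_inv_sandwich(1)[OF elim, of C] by (simp add: E_mat_entry)
  qed
  moreover have "(\<lambda>tau. tau * (C $ i $ j - (C ** ?Ai tau ** C) $ i $ j))
      \<in> O[at_top](\<lambda>tau. tau * 1)"
    using matrix_inv_C_plus_D_mat_products_bigo_1(3)[OF assms]
    by (intro landau_o.big.mult landau_o.big_refl sum_in_bigo(2)) simp_all
  ultimately show ?thesis
    by (simp add: landau_o.big.in_cong)
qed

lemma E_mat_bigo_1_if_row:
  assumes "pos_def_mat C" and "(\<lambda>tau. tau * D_mat C w mu tau $ i $ i) \<in> O[at_top](\<lambda>_. 1)"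
  shows "(\<lambda>tau. E_mat C w mu tau $ i $ j) \<in> O[at_top](\<lambda>_. 1)"
proof -
  have "E_mat C w mu tau $ i $ j
      = (tau * D_mat C w mu tau $ i $ i) * (matrix_inv (C + D_mat C w mu tau) ** C) $ i $ j" for tau
    by (simp add: E_mat_entry matrix_mul_assoc[symmetric]
        matrix_mult_diagonal_left[OF D_mat_off_diagonal])
  then show ?thesis
    using landau_o.big.mult[OF assms(2) matrix_inv_C_plus_D_mat_products_bigo_1(2)[OF assms(1)]]
    by simp
qed

lemma E_mat_bigo_1_if_column:
  assumes "pos_def_mat C" and "(\<lambda>tau. tau * D_mat C w mu tau $ j $ j) \<in> O[at_top](\<lambda>_. 1)"
  shows "(\<lambda>tau. E_mat C w mu tau $ i $ j) \<in> O[at_top](\<lambda>_. 1)"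
proof -
  have "\<forall>\<^sub>F tau in at_top. E_mat C w mu tau $ i $ j
      = (C ** matrix_inv (C + D_mat C w mu tau)) $ i $ j * (tau * D_mat C w mu tau $ j $ j)"
    using matrix_inv_C_plus_D_mat(1)[OF assms(1), of w mu]
  proof eventually_elim
    case (elim tau)
    show ?case
      using matrix_inv_sandwich(2)[OF elim, of C]
      by (simp add: E_mat_entry matrix_mult_diagonal_right[OF D_mat_off_diagonal])
  qed
  moreover have "(\<lambda>tau. (C ** matrix_inv (C + D_mat C w mu tau)) $ i $ j
      * (tau * D_mat C w mu tau $ j $ j)) \<in> O[at_top](\<lambda>_. 1 * 1)"
    using matrix_inv_C_plus_D_mat_products_bigo_1(1)[OF assms(1)] assms(2)
    by (rule landau_o.big.mult)
  ultimately show ?thesis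
    by (simp add: landau_o.big.in_cong)
qed

lemma tau_D_mat_bigo_1:
  assumes unique: "\<And>tau. tau > 0 \<Longrightarrow> \<exists>!u. tau_sol C w mu tau u"
    and lim: "((\<lambda>tau. u_hat C w mu tau) \<longlongrightarrow> U) at_top"
    and nonzero: "(matrix_inv C *v (w - U)) $ j \<noteq> 0"
  shows "(\<lambda>tau. tau * D_mat C w mu tau $ j $ j) \<in> O[at_top](\<lambda>_. 1)"
proof -
  let ?x = "(matrix_inv C *v (w - U)) $ j"
  let ?y = "\<lambda>tau. (matrix_inv C *v (w - u_hat C w mu tau)) $ j"
  have "(?y \<longlongrightarrow> ?x) at_top"
    by (intro tendsto_vec_nth isCont_tendsto_compose[OF matrix_vector_mult_linear_continuous_at]
        tendsto_diff tendsto_const lim)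
  then have "((\<lambda>tau. \<bar>?y tau\<bar>) \<longlongrightarrow> \<bar>?x\<bar>) at_top"
    by (rule tendsto_rabs)
  moreover have "\<bar>?x\<bar> / 2 < \<bar>?x\<bar>"
    using nonzero by simp
  ultimately have "\<forall>\<^sub>F tau in at_top. \<bar>?x\<bar> / 2 < \<bar>?y tau\<bar>"
    by (rule order_tendstoD(1))
  then have "\<forall>\<^sub>F tau in at_top.
      norm (tau * D_mat C w mu tau $ j $ j) \<le> 1 / (\<bar>?x\<bar> / 2)^2 * norm (1::real)"
    using eventually_gt_at_top[of 0]
  proof eventually_elim
    case (elim tau)
    have "tau_sol C w mu tau (u_hat C w mu tau)"
      unfolding u_hat_def using theI'[OF unique[OF elim(2)]] .
    then have eq: "(mu^2 - (u_hat C w mu tau $ j)^2) * ?y tau - u_hat C w mu tau $ j / tau = 0"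
      unfolding tau_sol_def by blast
    have y: "?y tau \<noteq> 0"
      using elim(1) by auto
    have "tau * D_mat C w mu tau $ j $ j
        = tau * (tau * (mu^2 - (u_hat C w mu tau $ j)^2)^2 / (mu^2 + (u_hat C w mu tau $ j)^2))"
      by (simp add: D_mat_def)
    also have "\<dots> \<le> 1 / (?y tau)^2"
      by (rule tau_sol_entry_weight_le[OF _ y eq]) (use elim(2) in linarith)
    also have "\<dots> \<le> 1 / (\<bar>?x\<bar> / 2)^2"
    proof (rule frac_le)
      have "(\<bar>?x\<bar> / 2)^2 \<le> \<bar>?y tau\<bar>^2"
        by (rule power_mono) (use elim(1) in linarith, simp)
      then show "(\<bar>?x\<bar> / 2)^2 \<le> (?y tau)^2"
        by simp
      show "0 < (\<bar>?x\<bar> / 2)^2"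
        using nonzero by simp
    qed simp_all
    finally show ?case
      using elim(2) D_mat_diagonal_nonneg[of tau C w mu j] by simp
  qed
  then show ?thesis
    by (rule bigoI)
qed

theorem proposition1:
  fixes C :: "real^'n^'n" and w :: "real^'n" and mu :: real and U :: "real^'n"
  assumes "pos_def_mat C" and "mu > 0"
    and "\<And>tau. tau > 0 \<Longrightarrow> \<exists>!u. tau_sol C w mu tau u"
    and "((\<lambda>tau. u_hat C w mu tau) \<longlongrightarrow> U) at_top"
    and "\<And>j. (matrix_inv C *v (w - U)) $ j = 0 \<Longrightarrow> \<bar>U $ j\<bar> < mu"
  shows "\<forall>i j. (if (matrix_inv C *v (w - U)) $ i = 0 \<and> (matrix_inv C *v (w - U)) $ j = 0
                 then (\<lambda>tau. E_mat C w mu tau $ i $ j) \<in> O[at_top](\<lambda>tau. tau)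
                 else (\<lambda>tau. E_mat C w mu tau $ i $ j) \<in> O[at_top](\<lambda>_. 1))"
proof (intro allI)
  fix i j
  let ?x = "matrix_inv C *v (w - U)"
  note tau_D = tau_D_mat_bigo_1[OF assms(3,4)]
  consider "?x $ i = 0 \<and> ?x $ j = 0" | "?x $ i \<noteq> 0" | "?x $ j \<noteq> 0"
    by blast
  then show "if ?x $ i = 0 \<and> ?x $ j = 0
      then (\<lambda>tau. E_mat C w mu tau $ i $ j) \<in> O[at_top](\<lambda>tau. tau)
      else (\<lambda>tau. E_mat C w mu tau $ i $ j) \<in> O[at_top](\<lambda>_. 1)"
    by cases (simp_all add: E_mat_bigo_tau E_mat_bigo_1_if_row E_mat_bigo_1_if_column tau_D assms(1))
qed

end
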